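(* Assume $\alpha\in(0,2)\cap(0,d]$ and let $\nu=1+\alpha/2$. Then for every $\theta\in(0,1)$ there is $C>0$ such that $|\Pi^n_{0,0}|((\Delta_n^{1-\theta},\infty)\times\mathbb R^d\times\mathbb R^d)\le C\Delta_n^{\nu\theta}$ for all $n$.
   Context: Noise covariance: either $\Lambda(\mathrm dy,\mathrm dz)=c_\alpha|z-y|^{-\alpha}\mathrm dy\mathrm dz$ with $0<\alpha<\min(d,2)$, $c_\alpha=\pi^{d/2-\alpha}\Gamma(\alpha/2)/\Gamma((d-\alpha)/2)$, or $d=1$, $\Lambda(\mathrm dy,\mathrm dz)=\delta_z(\mathrm dy)\mathrm dz$ ($\alpha:=1$). $G_x(t)=(2\pi\kappa t)^{-d/2}e^{-|x|^2/(2\kappa t)-\lambda t}\mathbf 1_{t>0}$, $\kappa,\lambda>0$; $0<\Delta_n\to0$, $\Delta_n<1$; $\tau_n^2=\int_0^\infty\int\int(G_y(s)-G_y(s-\Delta_n))(G_z(s)-G_z(s-\Delta_n))\Lambda(\mathrm dy,\mathrm dz)\mathrm ds$; $|\Pi^n_{0,0}|(A)=\int\int\int_A\frac{|G_y(s)-G_y(s-\Delta_n)||G_z(s)-G_z(s-\Delta_n)|}{\tau_n^2}\mathrm ds\,\Lambda(\mathrm dy,\mathrm dz)$. *)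

theory Defs
  imports "HOL-Analysis.Analysis"
begin

definition heatG :: "real \<Rightarrow> real \<Rightarrow> 'a::euclidean_space \<Rightarrow> real \<Rightarrow> real" where
  "heatG \<kappa> lam x t = (if t > 0 then
     (2 * pi * \<kappa> * t) powr (- real DIM('a) / 2) * exp (- (norm x)\<^sup>2 / (2 * \<kappa> * t) - lam * t)
   else 0)"

definition dG :: "real \<Rightarrow> real \<Rightarrow> real \<Rightarrow> 'a::euclidean_space \<Rightarrow> real \<Rightarrow> real" where
  "dG \<kappa> lam \<Delta> y s = heatG \<kappa> lam y s - heatG \<kappa> lam y (s - \<Delta>)"

definition riesz_const :: "nat \<Rightarrow> real \<Rightarrow> real" where
  "riesz_const d \<alpha> = pi powr (real d / 2 - \<alpha>) * Gamma (\<alpha> / 2) / Gamma ((real d - \<alpha>) / 2)"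

definition riesz_cov :: "real \<Rightarrow> ('a::euclidean_space \<times> 'a) measure" where
  "riesz_cov \<alpha> = density (lborel \<Otimes>\<^sub>M lborel)
      (\<lambda>(y, z). ennreal (riesz_const DIM('a) \<alpha> * norm (z - y) powr (- \<alpha>)))"

text \<open>White-noise covariance delta_z(dy) dz: image of Lebesgue measure under z |-> (z,z).\<close>
definition white_cov :: "('a::euclidean_space \<times> 'a) measure" where
  "white_cov = distr lborel (lborel \<Otimes>\<^sub>M lborel) (\<lambda>z. (z, z))"

definition noise_cov :: "real \<Rightarrow> ('a::euclidean_space \<times> 'a) measure \<Rightarrow> bool" where
  "noise_cov \<alpha> \<Lambda> \<longleftrightarrow>
     (0 < \<alpha> \<and> \<alpha> < min (real DIM('a)) 2 \<and> \<Lambda> = riesz_cov \<alpha>) \<or>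
     (DIM('a) = 1 \<and> \<alpha> = 1 \<and> \<Lambda> = white_cov)"

definition tau2 :: "real \<Rightarrow> real \<Rightarrow> ('a::euclidean_space \<times> 'a) measure \<Rightarrow> real \<Rightarrow> real" where
  "tau2 \<kappa> lam \<Lambda> \<Delta> =
     (LINT s:{0<..}|lborel. (LINT p|\<Lambda>. dG \<kappa> lam \<Delta> (fst p) s * dG \<kappa> lam \<Delta> (snd p) s))"

definition Pi_abs :: "real \<Rightarrow> real \<Rightarrow> ('a::euclidean_space \<times> 'a) measure \<Rightarrow> real
      \<Rightarrow> (real \<times> 'a \<times> 'a) set \<Rightarrow> ennreal" where
  "Pi_abs \<kappa> lam \<Lambda> \<Delta> A =
     (\<integral>\<^sup>+ p. (\<integral>\<^sup>+ s. indicator ({0<..} \<times> UNIV) (s, fst p, snd p) * indicator A (s, fst p, snd p) *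
        ennreal (\<bar>dG \<kappa> lam \<Delta> (fst p) s\<bar> * \<bar>dG \<kappa> lam \<Delta> (snd p) s\<bar> / tau2 \<kappa> lam \<Lambda> \<Delta>) \<partial>lborel) \<partial>\<Lambda>)"

end

theory Submission
  imports Defs
begin

text \<open>
  Under either noise, a product of two centred Gaussians integrates against \<open>\<Lambda>\<close> as against the
  Riesz kernel, so the \<open>\<Lambda>\<close>-integral of two heat kernels at times \<open>u, v\<close> equals
  \<open>K exp(-\<lambda>(u + v)) (u + v) powr (-\<alpha>/2)\<close>. Hence \<open>\<tau>\<^sub>n\<^sup>2\<close> is \<open>K\<close> times the integral of
  \<open>exp(-\<lambda>u) u powr (-\<alpha>/2)\<close> over \<open>(0, \<Delta>]\<close>, which is at least of order \<open>\<Delta> powr (1 - \<alpha>/2)\<close>.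
  For \<open>s \<ge> 2\<Delta>\<close> the mean value theorem bounds \<open>|G(s) - G(s - \<Delta>)|\<close> by \<open>\<Delta>/s\<close> times a heat
  kernel at time \<open>2s\<close>, so the unnormalised mass of \<open>|\<Pi>|\<close> beyond time \<open>a \<ge> 2\<Delta>\<close> is of order
  \<open>\<Delta>\<^sup>2 a powr (-1 - \<alpha>/2)\<close>; for \<open>a = \<Delta> powr (1 - \<theta>)\<close> this is \<open>\<Delta> powr (1 - \<alpha>/2)\<close> times
  \<open>\<Delta> powr (\<nu>\<theta>)\<close>. When \<open>a < 2\<Delta>\<close>, \<open>\<Delta>\<close> is bounded below and the crude bound
  \<open>|G(s) - G(s - \<Delta>)| \<le> G(s) + G(s - \<Delta>)\<close> suffices.
\<close>

section \<open>Gaussian integrals on euclidean space\<close>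

lemma exp_neg_square_le: "exp (- (t::real)\<^sup>2) \<le> exp (1/4) * exp (- \<bar>t\<bar>)"
proof -
  have "0 \<le> (\<bar>t\<bar> - 1/2)\<^sup>2" by simp
  then have "- t\<^sup>2 \<le> 1/4 - \<bar>t\<bar>" by (simp add: power2_eq_square algebra_simps abs_mult_self_eq)
  then show ?thesis by (simp add: exp_add[symmetric])
qed

lemma nn_integral_powr_exp_eq_Gamma:
  assumes "\<beta> < 1"
  shows "(\<integral>\<^sup>+t. ennreal (indicator {0..} t * (t powr (-\<beta>) * exp (- t))) \<partial>lborel) = ennreal (Gamma (1 - \<beta>))"
proof -
  have "(\<integral>\<^sup>+t. ennreal (indicator {0..} t * (t powr (-\<beta>) * exp (- t))) \<partial>lborel)
      = (\<integral>\<^sup>+t. ennreal (indicator {0..} t * t powr ((1 - \<beta>) - 1) / exp t) \<partial>lborel)"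
    by (intro nn_integral_cong) (simp add: exp_minus field_simps)
  also have "\<dots> = Gamma (1 - \<beta>)"
    using Gamma_conv_nn_integral_real[of "1 - \<beta>"] assms by simp
  finally show ?thesis .
qed

lemma nn_integral_abs_powr_gaussian_finite:
  assumes "\<beta> < 1"
  shows "(\<integral>\<^sup>+t. ennreal (\<bar>t\<bar> powr (-\<beta>) * exp (- t\<^sup>2)) \<partial>lborel) < \<infinity>"
proof -
  define h where "h t = ennreal (indicator {0..} t * (t powr (-\<beta>) * exp (- t)))" for t :: real
  have [measurable]: "h \<in> borel_measurable borel" unfolding h_def by measurable
  have "(\<integral>\<^sup>+t. ennreal (\<bar>t\<bar> powr (-\<beta>) * exp (- t\<^sup>2)) \<partial>lborel)
      \<le> (\<integral>\<^sup>+t. ennreal (exp (1/4)) * (h t + h (0 + (-1) * t)) \<partial>lborel)"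
  proof (intro nn_integral_mono)
    fix t :: real
    have "\<bar>t\<bar> powr (-\<beta>) * exp (- t\<^sup>2) \<le> \<bar>t\<bar> powr (-\<beta>) * (exp (1/4) * exp (- \<bar>t\<bar>))"
      by (intro mult_left_mono exp_neg_square_le) simp
    also have "\<dots> = exp (1/4) * (indicator {0..} t * (t powr (-\<beta>) * exp (- t))
          + indicator {0..} (-t) * ((-t) powr (-\<beta>) * exp (- (-t))))"
      by (cases "t \<ge> 0") (auto simp: indicator_def)
    finally show "ennreal (\<bar>t\<bar> powr (-\<beta>) * exp (- t\<^sup>2)) \<le> ennreal (exp (1/4)) * (h t + h (0 + (-1) * t))"
      unfolding h_def by (simp add: ennreal_mult[symmetric] ennreal_plus[symmetric] del: ennreal_plus)
  qed
  also have "\<dots> = ennreal (exp (1/4)) * ((\<integral>\<^sup>+t. h t \<partial>lborel) + (\<integral>\<^sup>+t. h (0 + (-1) * t) \<partial>lborel))"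
    by (simp add: nn_integral_cmult nn_integral_add)
  also have "(\<integral>\<^sup>+t. h (0 + (-1) * t) \<partial>lborel) = (\<integral>\<^sup>+t. h t \<partial>lborel)"
    using nn_integral_real_affine[of h "-1" 0] by simp
  also have "ennreal (exp (1/4)) * ((\<integral>\<^sup>+t. h t \<partial>lborel) + (\<integral>\<^sup>+t. h t \<partial>lborel)) < \<infinity>"
    using nn_integral_powr_exp_eq_Gamma[OF assms] unfolding h_def by (simp add: ennreal_mult_less_top)
  finally show ?thesis .
qed

lemma nn_integral_le_prod_Basis:
  fixes F :: "'a::euclidean_space \<Rightarrow> ennreal" and g :: "real \<Rightarrow> ennreal"
  assumes [measurable]: "F \<in> borel_measurable borel" "g \<in> borel_measurable borel"
    and le: "\<And>x. F x \<le> (\<Prod>b\<in>Basis. g (x \<bullet> b))"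
  shows "(\<integral>\<^sup>+x. F x \<partial>lborel) \<le> (\<Prod>b\<in>(Basis::'a set). \<integral>\<^sup>+t. g t \<partial>lborel)"
proof -
  interpret product_sigma_finite "\<lambda>_::'a. lborel::real measure" by standard
  have "(\<integral>\<^sup>+x. F x \<partial>lborel) = (\<integral>\<^sup>+x. F x \<partial>distr (\<Pi>\<^sub>M b\<in>(Basis::'a set). lborel) borel (\<lambda>f. \<Sum>b\<in>Basis. f b *\<^sub>R b))"
    by (simp only: lborel_eq[symmetric])
  also have "\<dots> = (\<integral>\<^sup>+f. F (\<Sum>b\<in>Basis. f b *\<^sub>R b) \<partial>(\<Pi>\<^sub>M b\<in>(Basis::'a set). lborel))"
    by (intro nn_integral_distr) measurable
  also have "\<dots> \<le> (\<integral>\<^sup>+f. (\<Prod>b\<in>Basis. g (f b)) \<partial>(\<Pi>\<^sub>M b\<in>(Basis::'a set). lborel))"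
  proof (intro nn_integral_mono)
    fix f :: "'a \<Rightarrow> real"
    have "(\<Sum>b\<in>Basis. f b *\<^sub>R b) \<bullet> b' = f b'" if "b' \<in> Basis" for b'
      using that by (simp add: inner_sum_left inner_Basis if_distrib cong: if_cong)
    then show "F (\<Sum>b\<in>Basis. f b *\<^sub>R b) \<le> (\<Prod>b\<in>Basis. g (f b))"
      using le[of "\<Sum>b\<in>Basis. f b *\<^sub>R b"] by (metis (no_types, lifting) prod.cong)
  qed
  also have "\<dots> = (\<Prod>b\<in>(Basis::'a set). \<integral>\<^sup>+t. g t \<partial>lborel)"
    using product_nn_integral_prod[of "Basis::'a set" "\<lambda>_. g"] by simp
  finally show ?thesis .
qed

lemma exp_neg_norm_sq_prod_Basis:
  "exp (- (norm (x::'a::euclidean_space))\<^sup>2) = (\<Prod>b\<in>Basis. exp (- (x \<bullet> b)\<^sup>2))"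
proof -
  have "(norm x)\<^sup>2 = (\<Sum>b\<in>Basis. (x \<bullet> b)\<^sup>2)"
    by (subst power2_norm_eq_inner, subst euclidean_inner, simp add: power2_eq_square)
  then show ?thesis by (simp add: exp_sum sum_negf[symmetric])
qed

text \<open>The singularity \<open>norm x powr (-\<alpha>)\<close> is split evenly over the coordinates using
  \<open>\<bar>x \<bullet> b\<bar> \<le> norm x\<close>, leaving each coordinate the integrable singularity \<open>\<bar>t\<bar> powr (-\<alpha>/d)\<close>.\<close>
lemma nn_integral_norm_powr_gaussian_finite:
  assumes "0 \<le> \<alpha>" "\<alpha> < real DIM('a::euclidean_space)"
  shows "(\<integral>\<^sup>+x. ennreal (norm (x::'a) powr (-\<alpha>) * exp (- (norm x)\<^sup>2)) \<partial>lborel) < \<infinity>"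
proof -
  define \<beta> where "\<beta> = \<alpha> / real DIM('a)"
  have \<beta>: "0 \<le> \<beta>" "\<beta> < 1" using assms by (auto simp: \<beta>_def field_simps)
  define g where "g t = (if t = 0 then top else ennreal (\<bar>t\<bar> powr (-\<beta>) * exp (- t\<^sup>2)))" for t :: real
  have [measurable]: "g \<in> borel_measurable borel" unfolding g_def by measurable
  have "(\<integral>\<^sup>+x. ennreal (norm (x::'a) powr (-\<alpha>) * exp (- (norm x)\<^sup>2)) \<partial>lborel) \<le> (\<Prod>b\<in>(Basis::'a set). \<integral>\<^sup>+t. g t \<partial>lborel)"
  proof (intro nn_integral_le_prod_Basis)
    fix x :: 'a
    show "ennreal (norm x powr (-\<alpha>) * exp (- (norm x)\<^sup>2)) \<le> (\<Prod>b\<in>Basis. g (x \<bullet> b))"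
    proof (cases "\<exists>b\<in>Basis. x \<bullet> b = 0")
      case True
      then have "(\<Prod>b\<in>Basis. g (x \<bullet> b)) = top"
        by (subst ennreal_prod_eq_top) (auto simp: g_def)
      then show ?thesis by simp
    next
      case False
      then have nz: "\<And>b. b \<in> Basis \<Longrightarrow> x \<bullet> b \<noteq> 0" by auto
      then have "x \<noteq> 0" using nonempty_Basis by fastforce
      have "norm x powr (-\<alpha>) = (\<Prod>b\<in>(Basis::'a set). norm x powr (-\<beta>))"
        using \<open>x \<noteq> 0\<close> by (simp add: prod_constant powr_power \<beta>_def)
      also have "\<dots> \<le> (\<Prod>b\<in>Basis. \<bar>x \<bullet> b\<bar> powr (-\<beta>))"
        using nz \<beta> by (intro prod_mono conjI powr_mono2' Basis_le_norm) auto
      finally have "norm x powr (-\<alpha>) * exp (- (norm x)\<^sup>2)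
          \<le> (\<Prod>b\<in>Basis. \<bar>x \<bullet> b\<bar> powr (-\<beta>)) * (\<Prod>b\<in>Basis. exp (- (x \<bullet> b)\<^sup>2))"
        by (simp add: exp_neg_norm_sq_prod_Basis mult_right_mono prod_nonneg)
      then show ?thesis using nz
        by (simp add: g_def prod_ennreal prod_nonneg prod.distrib[symmetric])
    qed
  qed measurable
  also have "(\<integral>\<^sup>+t. g t \<partial>lborel) = (\<integral>\<^sup>+t. ennreal (\<bar>t\<bar> powr (-\<beta>) * exp (- t\<^sup>2)) \<partial>lborel)"
    by (intro nn_integral_cong_AE) (use AE_lborel_singleton[of 0] in \<open>auto simp: g_def\<close>)
  also have "(\<Prod>b\<in>(Basis::'a set). \<integral>\<^sup>+t. ennreal (\<bar>t\<bar> powr (-\<beta>) * exp (- t\<^sup>2)) \<partial>lborel) < \<infinity>"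
    using nn_integral_abs_powr_gaussian_finite[of \<beta>] \<beta> by (simp add: power_less_top_ennreal)
  finally show ?thesis .
qed

lemma nn_integral_lborel_scaleR:
  fixes f :: "'a::euclidean_space \<Rightarrow> ennreal"
  assumes "r > 0" and [measurable]: "f \<in> borel_measurable borel"
  shows "(\<integral>\<^sup>+x. f x \<partial>lborel) = ennreal (r ^ DIM('a)) * (\<integral>\<^sup>+x. f (r *\<^sub>R x) \<partial>lborel)"
  using assms(1) by (subst lborel_affine[of r 0]) (simp_all add: nn_integral_density nn_integral_distr nn_integral_cmult)

lemma nn_integral_lborel_translate:
  fixes f :: "'a::euclidean_space \<Rightarrow> ennreal"
  assumes [measurable]: "f \<in> borel_measurable borel"
  shows "(\<integral>\<^sup>+x. f (v + x) \<partial>lborel) = (\<integral>\<^sup>+x. f x \<partial>lborel)"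
  by (subst (2) lborel_distr_plus[of v, symmetric]) (simp add: nn_integral_distr)

definition gauss_moment :: "'a::euclidean_space itself \<Rightarrow> real \<Rightarrow> real" where
  "gauss_moment _ \<alpha> = enn2real (\<integral>\<^sup>+x. ennreal (norm (x::'a) powr (-\<alpha>) * exp (- (norm x)\<^sup>2)) \<partial>lborel)"

lemma nn_integral_gauss_moment:
  assumes "0 \<le> \<alpha>" "\<alpha> < real DIM('a::euclidean_space)"
  shows "(\<integral>\<^sup>+x. ennreal (norm (x::'a) powr (-\<alpha>) * exp (- (norm x)\<^sup>2)) \<partial>lborel)
       = ennreal (gauss_moment TYPE('a) \<alpha>)"
  using nn_integral_norm_powr_gaussian_finite[OF assms] unfolding gauss_moment_def by simp

lemma gauss_moment_pos:
  assumes "0 \<le> \<alpha>" "\<alpha> < real DIM('a::euclidean_space)"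
  shows "gauss_moment TYPE('a) \<alpha> > 0"
proof -
  have "\<not> (AE x in lborel. ennreal (norm (x::'a) powr (-\<alpha>) * exp (- (norm x)\<^sup>2)) = 0)"
  proof
    assume "AE x in lborel. ennreal (norm (x::'a) powr (-\<alpha>) * exp (- (norm x)\<^sup>2)) = 0"
    then have "AE x in (lborel::'a measure). False"
      using AE_lborel_singleton[of 0] by eventually_elim auto
    then show False by (simp add: AE_iff_measurable[OF _ refl])
  qed
  then have "ennreal (gauss_moment TYPE('a) \<alpha>) \<noteq> 0"
    by (simp add: nn_integral_gauss_moment[OF assms, symmetric] nn_integral_0_iff_AE)
  then show ?thesis by (simp add: gauss_moment_def order_less_le)
qed

lemma nn_integral_norm_powr_gaussian_scaled:
  assumes t: "t > 0" and \<alpha>: "0 \<le> \<alpha>" "\<alpha> < real DIM('a::euclidean_space)"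
  shows "(\<integral>\<^sup>+w. ennreal (norm (w::'a) powr (-\<alpha>) * exp (- (norm w)\<^sup>2 / t)) \<partial>lborel)
       = ennreal (t powr (real DIM('a) / 2) * t powr (-\<alpha>/2) * gauss_moment TYPE('a) \<alpha>)"
proof -
  have scale: "norm (sqrt t *\<^sub>R w) powr (-\<alpha>) * exp (- (norm (sqrt t *\<^sub>R w))\<^sup>2 / t)
      = t powr (-\<alpha>/2) * (norm w powr (-\<alpha>) * exp (- (norm w)\<^sup>2))" for w :: 'a
  proof -
    have "norm (sqrt t *\<^sub>R w) powr (-\<alpha>) = t powr (-\<alpha>/2) * norm w powr (-\<alpha>)"
      using t by (simp add: powr_mult powr_half_sqrt[symmetric] powr_powr)
    moreover have "(norm (sqrt t *\<^sub>R w))\<^sup>2 / t = (norm w)\<^sup>2" using t by (simp add: power_mult_distrib)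
    ultimately show ?thesis by simp
  qed
  have "(\<integral>\<^sup>+w. ennreal (norm (w::'a) powr (-\<alpha>) * exp (- (norm w)\<^sup>2 / t)) \<partial>lborel)
      = ennreal (sqrt t ^ DIM('a)) * (\<integral>\<^sup>+w. ennreal (norm (sqrt t *\<^sub>R (w::'a)) powr (-\<alpha>) * exp (- (norm (sqrt t *\<^sub>R w))\<^sup>2 / t)) \<partial>lborel)"
    using t by (intro nn_integral_lborel_scaleR) auto
  also have "\<dots> = ennreal (sqrt t ^ DIM('a)) * (\<integral>\<^sup>+w. ennreal (t powr (-\<alpha>/2)) * ennreal (norm (w::'a) powr (-\<alpha>) * exp (- (norm w)\<^sup>2)) \<partial>lborel)"
    by (simp only: scale ennreal_mult powr_ge_zero mult_nonneg_nonneg exp_ge_zero)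
  also have "\<dots> = ennreal (sqrt t ^ DIM('a)) * (ennreal (t powr (-\<alpha>/2)) * ennreal (gauss_moment TYPE('a) \<alpha>))"
    by (simp add: nn_integral_cmult nn_integral_gauss_moment[OF \<alpha>])
  finally show ?thesis
    using t gauss_moment_pos[OF \<alpha>]
    by (simp add: powr_half_sqrt[symmetric] powr_power ennreal_mult[symmetric] mult_ac)
qed

lemma nn_integral_gaussian_scaled:
  assumes t: "t > 0"
  shows "(\<integral>\<^sup>+w. ennreal (exp (- (norm (w::'a::euclidean_space))\<^sup>2 / t)) \<partial>lborel)
       = ennreal (t powr (real DIM('a) / 2) * gauss_moment TYPE('a) 0)"
proof -
  have "(\<integral>\<^sup>+w. ennreal (exp (- (norm (w::'a))\<^sup>2 / t)) \<partial>lborel)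
      = (\<integral>\<^sup>+w. ennreal (norm (w::'a) powr (-0) * exp (- (norm w)\<^sup>2 / t)) \<partial>lborel)"
    by (intro nn_integral_cong_AE) (use AE_lborel_singleton[of 0] in auto)
  then show ?thesis using nn_integral_norm_powr_gaussian_scaled[OF t, of 0, where 'a='a] t by simp
qed

lemma norm_sq_complete_square:
  fixes y w :: "'a::real_inner"
  assumes a: "a > 0" and b: "b > 0"
  shows "(norm y)\<^sup>2 / a + (norm (y + w))\<^sup>2 / b
       = (norm w)\<^sup>2 / (a + b) + (norm ((a / (a + b)) *\<^sub>R w + y))\<^sup>2 / (a * b / (a + b))"
proof -
  define S where "S = a + b"
  have "S > 0" using a b by (simp add: S_def)
  then have "(y \<bullet> y) / a + (y \<bullet> y + 2 * (y \<bullet> w) + w \<bullet> w) / b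
      = (w \<bullet> w) / S + ((a / S)\<^sup>2 * (w \<bullet> w) + 2 * (a / S) * (y \<bullet> w) + y \<bullet> y) / (a * b / S)"
    using a b by (simp add: field_simps power2_eq_square) (simp add: S_def algebra_simps)
  moreover have "(norm (y + w))\<^sup>2 = y \<bullet> y + 2 * (y \<bullet> w) + w \<bullet> w"
    "(norm ((a / S) *\<^sub>R w + y))\<^sup>2 = (a / S)\<^sup>2 * (w \<bullet> w) + 2 * (a / S) * (y \<bullet> w) + y \<bullet> y"
    unfolding power2_norm_eq_inner by (simp_all add: inner_add inner_commute power2_eq_square)
  ultimately show ?thesis by (simp add: S_def power2_norm_eq_inner)
qed

lemma nn_integral_gaussian_product:
  fixes w :: "'a::euclidean_space"
  assumes a: "a > 0" and b: "b > 0"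
  shows "(\<integral>\<^sup>+y. ennreal (exp (- (norm y)\<^sup>2 / a) * exp (- (norm (y + w))\<^sup>2 / b)) \<partial>lborel)
       = ennreal (exp (- (norm w)\<^sup>2 / (a + b)) * (a * b / (a + b)) powr (real DIM('a) / 2) * gauss_moment TYPE('a) 0)"
proof -
  define s where "s = a * b / (a + b)"
  have s: "s > 0" using a b by (simp add: s_def)
  have "exp (- (norm y)\<^sup>2 / a) * exp (- (norm (y + w))\<^sup>2 / b)
      = exp (- (norm w)\<^sup>2 / (a + b)) * exp (- (norm ((a / (a + b)) *\<^sub>R w + y))\<^sup>2 / s)" for y :: 'a
    using norm_sq_complete_square[OF a b, of y w]
    by (simp add: s_def exp_add[symmetric] minus_divide_left[symmetric] del: minus_divide_left)
  then have "(\<integral>\<^sup>+y. ennreal (exp (- (norm y)\<^sup>2 / a) * exp (- (norm (y + w))\<^sup>2 / b)) \<partial>lborel)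
      = ennreal (exp (- (norm w)\<^sup>2 / (a + b))) * (\<integral>\<^sup>+y. ennreal (exp (- (norm ((a / (a + b)) *\<^sub>R w + y))\<^sup>2 / s)) \<partial>lborel)"
    by (simp add: ennreal_mult nn_integral_cmult)
  also have "(\<integral>\<^sup>+y. ennreal (exp (- (norm ((a / (a + b)) *\<^sub>R w + y))\<^sup>2 / s)) \<partial>lborel)
      = ennreal (s powr (real DIM('a) / 2) * gauss_moment TYPE('a) 0)"
    using nn_integral_lborel_translate[of "\<lambda>y. ennreal (exp (- (norm y)\<^sup>2 / s))" "(a / (a + b)) *\<^sub>R w"]
      nn_integral_gaussian_scaled[OF s, where 'a='a] by simp
  finally show ?thesis
    using s gauss_moment_pos[of 0, where 'a='a] by (simp add: s_def ennreal_mult[symmetric] mult_ac)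
qed

section \<open>The noise covariances\<close>

lemma riesz_const_pos:
  assumes "0 < \<alpha>" "\<alpha> < real d"
  shows "riesz_const d \<alpha> > 0"
  using assms unfolding riesz_const_def by (intro divide_pos_pos mult_pos_pos Gamma_real_pos) auto

lemma riesz_cov_gaussian_pair:
  assumes \<alpha>: "0 < \<alpha>" "\<alpha> < real DIM('a::euclidean_space)" and a: "a > 0" and b: "b > 0"
  shows "(\<integral>\<^sup>+p. ennreal (exp (- (norm (fst p))\<^sup>2 / a) * exp (- (norm (snd p))\<^sup>2 / b)) \<partial>(riesz_cov \<alpha> :: ('a \<times> 'a) measure))
     = ennreal (riesz_const DIM('a) \<alpha> * gauss_moment TYPE('a) 0 * gauss_moment TYPE('a) \<alpha>
         * ((a * b) powr (real DIM('a) / 2) * (a + b) powr (- \<alpha> / 2)))"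
proof -
  define c where "c = riesz_const DIM('a) \<alpha>"
  define s where "s = a * b / (a + b)"
  have c: "c > 0" using riesz_const_pos[OF \<alpha>] by (simp add: c_def)
  have s: "s > 0" using a b by (simp add: s_def)
  have M0: "gauss_moment TYPE('a) 0 > 0" and M\<alpha>: "gauss_moment TYPE('a) \<alpha> > 0"
    using gauss_moment_pos[where 'a='a] \<alpha> by auto
  let ?g = "\<lambda>y z::'a. ennreal (exp (- (norm y)\<^sup>2 / a) * exp (- (norm z)\<^sup>2 / b))"
  have "(\<integral>\<^sup>+p. ?g (fst p) (snd p) \<partial>(riesz_cov \<alpha> :: ('a \<times> 'a) measure))
      = (\<integral>\<^sup>+y. \<integral>\<^sup>+z. ennreal (c * norm (z - y) powr (- \<alpha>)) * ?g y z \<partial>lborel \<partial>lborel)"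
    unfolding riesz_cov_def c_def
    by (subst nn_integral_density) (simp_all add: lborel.nn_integral_fst[symmetric] split_beta')
  also have "\<dots> = (\<integral>\<^sup>+y. \<integral>\<^sup>+w. ennreal (c * norm w powr (- \<alpha>)) * ?g y (y + w) \<partial>lborel \<partial>lborel)"
  proof (rule nn_integral_cong)
    fix y :: 'a
    show "(\<integral>\<^sup>+z. ennreal (c * norm (z - y) powr (- \<alpha>)) * ?g y z \<partial>lborel)
        = (\<integral>\<^sup>+w. ennreal (c * norm w powr (- \<alpha>)) * ?g y (y + w) \<partial>lborel)"
      using nn_integral_lborel_translate[of "\<lambda>z. ennreal (c * norm (z - y) powr (- \<alpha>)) * ?g y z" y] by simp
  qed
  also have "\<dots> = (\<integral>\<^sup>+w. ennreal (c * norm w powr (- \<alpha>)) * (\<integral>\<^sup>+y. ?g y (y + w) \<partial>lborel) \<partial>lborel)"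
    by (subst lborel_pair.Fubini') (simp_all add: nn_integral_cmult)
  also have "\<dots> = (\<integral>\<^sup>+w. ennreal (c * s powr (real DIM('a) / 2) * gauss_moment TYPE('a) 0)
      * ennreal (norm (w::'a) powr (- \<alpha>) * exp (- (norm w)\<^sup>2 / (a + b))) \<partial>lborel)"
    using c s M0 unfolding s_def
    by (intro nn_integral_cong, subst nn_integral_gaussian_product[OF a b]) (simp add: ennreal_mult[symmetric] mult_ac)
  also have "\<dots> = ennreal (c * s powr (real DIM('a) / 2) * gauss_moment TYPE('a) 0)
      * ennreal ((a + b) powr (real DIM('a) / 2) * (a + b) powr (- \<alpha> / 2) * gauss_moment TYPE('a) \<alpha>)"
    using a b \<alpha> by (subst nn_integral_cmult, simp, subst nn_integral_norm_powr_gaussian_scaled) simp_all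
  also have "\<dots> = ennreal (c * gauss_moment TYPE('a) 0 * gauss_moment TYPE('a) \<alpha>
      * ((a * b) powr (real DIM('a) / 2) * (a + b) powr (- \<alpha> / 2)))"
    using c s M0 M\<alpha> a b by (simp add: ennreal_mult[symmetric] s_def powr_divide mult_ac)
  finally show ?thesis by (simp add: c_def)
qed

lemma white_cov_gaussian_pair:
  assumes d: "DIM('a::euclidean_space) = 1" and a: "a > 0" and b: "b > 0"
  shows "(\<integral>\<^sup>+p. ennreal (exp (- (norm (fst p))\<^sup>2 / a) * exp (- (norm (snd p))\<^sup>2 / b)) \<partial>(white_cov :: ('a \<times> 'a) measure))
     = ennreal (gauss_moment TYPE('a) 0 * ((a * b) powr (real DIM('a) / 2) * (a + b) powr (- 1 / 2)))"
proof -
  have "(\<integral>\<^sup>+p. ennreal (exp (- (norm (fst p))\<^sup>2 / a) * exp (- (norm (snd p))\<^sup>2 / b)) \<partial>(white_cov :: ('a \<times> 'a) measure))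
      = (\<integral>\<^sup>+z. ennreal (exp (- (norm (z::'a))\<^sup>2 / a) * exp (- (norm (z + 0))\<^sup>2 / b)) \<partial>lborel)"
    unfolding white_cov_def by (subst nn_integral_distr) simp_all
  also have "\<dots> = ennreal (gauss_moment TYPE('a) 0 * (a * b / (a + b)) powr (real DIM('a) / 2))"
    using nn_integral_gaussian_product[OF a b, of "0::'a"] by (simp add: mult_ac)
  also have "(a * b / (a + b)) powr (real DIM('a) / 2) = (a * b) powr (real DIM('a) / 2) * (a + b) powr (- 1 / 2)"
    using a b d by (simp add: powr_divide powr_minus_divide)
  finally show ?thesis .
qed

lemma noise_cov_gaussian_pair:
  assumes "noise_cov \<alpha> (\<Lambda> :: ('a::euclidean_space \<times> 'a) measure)"
  shows "\<exists>c>0. \<forall>a b. 0 < a \<longrightarrow> 0 < b \<longrightarrow>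
     (\<integral>\<^sup>+p. ennreal (exp (- (norm (fst p))\<^sup>2 / a) * exp (- (norm (snd p))\<^sup>2 / b)) \<partial>\<Lambda>)
       = ennreal (c * ((a * b) powr (real DIM('a) / 2) * (a + b) powr (- \<alpha> / 2)))"
  using assms unfolding noise_cov_def
proof (elim disjE conjE)
  assume \<alpha>: "0 < \<alpha>" "\<alpha> < min (real DIM('a)) 2" and "\<Lambda> = riesz_cov \<alpha>"
  then show ?thesis
    using riesz_const_pos[of \<alpha> "DIM('a)"] gauss_moment_pos[of 0, where 'a='a] gauss_moment_pos[of \<alpha>, where 'a='a]
      riesz_cov_gaussian_pair[of \<alpha>, where 'a='a]
    by (intro exI[of _ "riesz_const DIM('a) \<alpha> * gauss_moment TYPE('a) 0 * gauss_moment TYPE('a) \<alpha>"]) auto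
next
  assume "DIM('a) = 1" "\<alpha> = 1" "\<Lambda> = white_cov"
  then show ?thesis
    using gauss_moment_pos[of 0, where 'a='a] white_cov_gaussian_pair[where 'a='a]
    by (intro exI[of _ "gauss_moment TYPE('a) 0"]) auto
qed

lemma sets_noise_cov:
  assumes "noise_cov \<alpha> (\<Lambda> :: ('a::euclidean_space \<times> 'a) measure)"
  shows "sets \<Lambda> = sets (borel \<Otimes>\<^sub>M borel)"
proof -
  have "sets (lborel \<Otimes>\<^sub>M lborel :: ('a \<times> 'a) measure) = sets (borel \<Otimes>\<^sub>M borel)"
    by (rule sets_pair_measure_cong) simp_all
  then show ?thesis using assms unfolding noise_cov_def riesz_cov_def white_cov_def by auto
qed

lemma sigma_finite_white_cov: "sigma_finite_measure (white_cov :: ('a::euclidean_space \<times> 'a) measure)"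
proof
  let ?W = "white_cov :: ('a \<times> 'a) measure"
  let ?A = "range (\<lambda>n::nat. cball (0::'a) (real n) \<times> cball (0::'a) (real n))"
  have "\<Union> ?A = UNIV"
  proof (auto simp: mem_Times_iff)
    fix x y :: 'a
    obtain n :: nat where "n \<ge> max (norm x) (norm y)" using real_arch_simple by blast
    then show "\<exists>n. norm x \<le> real n \<and> norm y \<le> real n" by auto
  qed
  moreover have "emeasure ?W (cball 0 r \<times> cball 0 r) \<noteq> \<infinity>" for r :: real
  proof -
    have "emeasure ?W (cball 0 r \<times> cball 0 r) = emeasure lborel ((\<lambda>z::'a. (z, z)) -` (cball 0 r \<times> cball 0 r) \<inter> space lborel)"
      unfolding white_cov_def by (subst emeasure_distr) auto
    also have "(\<lambda>z::'a. (z, z)) -` (cball 0 r \<times> cball 0 r) \<inter> space lborel = cball 0 r" by auto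
    finally show ?thesis using emeasure_bounded_finite[of "cball (0::'a) r"] by simp
  qed
  ultimately show "\<exists>A. countable A \<and> A \<subseteq> sets ?W \<and> \<Union> A = space ?W \<and> (\<forall>a\<in>A. emeasure ?W a \<noteq> \<infinity>)"
    by (intro exI[of _ ?A]) (auto simp: white_cov_def space_pair_measure)
qed

lemma sigma_finite_noise_cov:
  assumes "noise_cov \<alpha> (\<Lambda> :: ('a::euclidean_space \<times> 'a) measure)"
  shows "sigma_finite_measure \<Lambda>"
  using assms sigma_finite_white_cov unfolding noise_cov_def riesz_cov_def
  by (auto simp: split_beta' sigma_finite_measure.sigma_finite_iff_density_finite[OF sigma_finite_pair_measure[OF sigma_finite_lborel sigma_finite_lborel]])

section \<open>Heat kernels under the noise covariance\<close>

lemma heatG_measurable [measurable]: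
  assumes [measurable]: "f \<in> M \<rightarrow>\<^sub>M borel" "g \<in> borel_measurable M"
  shows "(\<lambda>x. heatG \<kappa> lam (f x :: 'a::euclidean_space) (g x)) \<in> borel_measurable M"
  unfolding heatG_def by measurable

lemma heatG_nonneg: "heatG \<kappa> lam y t \<ge> 0"
  unfolding heatG_def by simp

definition cov_profile :: "real \<Rightarrow> real \<Rightarrow> real \<Rightarrow> real" where
  "cov_profile lam \<alpha> u = (if u > 0 then exp (- lam * u) * u powr (- \<alpha> / 2) else 0)"

definition time_cov :: "real \<Rightarrow> real \<Rightarrow> real \<Rightarrow> real \<Rightarrow> real" where
  "time_cov lam \<alpha> u v = (if 0 < u \<and> 0 < v then cov_profile lam \<alpha> (u + v) else 0)"

lemma cov_profile_measurable [measurable]: "cov_profile lam \<alpha> \<in> borel_measurable borel"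
  unfolding cov_profile_def by measurable

lemma cov_profile_nonneg: "cov_profile lam \<alpha> u \<ge> 0"
  by (simp add: cov_profile_def)

lemma time_cov_nonneg: "time_cov lam \<alpha> u v \<ge> 0"
  by (simp add: time_cov_def cov_profile_nonneg)

lemma time_cov_le_cov_profile: "time_cov lam \<alpha> u v \<le> cov_profile lam \<alpha> (u + v)"
  by (simp add: time_cov_def cov_profile_nonneg)

lemma heatG_mult_heatG:
  assumes "u > 0" "v > 0"
  shows "heatG \<kappa> lam (y::'a::euclidean_space) u * heatG \<kappa> lam (z::'a) v
    = (2 * pi * \<kappa> * u) powr (- real DIM('a) / 2) * (2 * pi * \<kappa> * v) powr (- real DIM('a) / 2)
      * exp (- lam * (u + v)) * (exp (- (norm y)\<^sup>2 / (2 * \<kappa> * u)) * exp (- (norm z)\<^sup>2 / (2 * \<kappa> * v)))"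
  using assms unfolding heatG_def by (simp add: exp_add[symmetric] exp_diff exp_minus field_simps)

lemma noise_cov_heat_product:
  assumes N: "noise_cov \<alpha> (\<Lambda> :: ('a::euclidean_space \<times> 'a) measure)" and \<kappa>: "\<kappa> > 0"
  shows "\<exists>K>0. \<forall>lam u v.
     (\<integral>\<^sup>+p. ennreal (heatG \<kappa> lam (fst p) u * heatG \<kappa> lam (snd p) v) \<partial>\<Lambda>) = ennreal (K * time_cov lam \<alpha> u v)"
proof -
  obtain c where c: "c > 0" and gauss: "\<And>a b. 0 < a \<Longrightarrow> 0 < b \<Longrightarrow>
     (\<integral>\<^sup>+p. ennreal (exp (- (norm (fst p))\<^sup>2 / a) * exp (- (norm (snd p))\<^sup>2 / b)) \<partial>\<Lambda>)
       = ennreal (c * ((a * b) powr (real DIM('a) / 2) * (a + b) powr (- \<alpha> / 2)))"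
    using noise_cov_gaussian_pair[OF N] by blast
  define d where "d = real DIM('a)"
  define K where "K = c * pi powr (- d) * (2 * \<kappa>) powr (- \<alpha> / 2)"
  have "(\<integral>\<^sup>+p. ennreal (heatG \<kappa> lam (fst p) u * heatG \<kappa> lam (snd p) v) \<partial>\<Lambda>) = ennreal (K * time_cov lam \<alpha> u v)"
    for lam u v
  proof (cases "0 < u \<and> 0 < v")
    case False
    then show ?thesis by (auto simp: heatG_def time_cov_def)
  next
    case True
    define a where "a = 2 * \<kappa> * u"
    define b where "b = 2 * \<kappa> * v"
    have a: "a > 0" and b: "b > 0" using True \<kappa> by (simp_all add: a_def b_def)
    define C where "C = (pi * a) powr (- d / 2) * (pi * b) powr (- d / 2) * exp (- lam * (u + v))"
    have C: "C \<ge> 0" by (simp add: C_def)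
    have "(\<integral>\<^sup>+p. ennreal (heatG \<kappa> lam (fst p) u * heatG \<kappa> lam (snd p) v) \<partial>\<Lambda>)
        = (\<integral>\<^sup>+p. ennreal C * ennreal (exp (- (norm (fst p :: 'a))\<^sup>2 / a) * exp (- (norm (snd p :: 'a))\<^sup>2 / b)) \<partial>\<Lambda>)"
      using True C by (intro nn_integral_cong)
        (simp add: heatG_mult_heatG C_def a_def b_def d_def ennreal_mult[symmetric] mult_ac)
    also have "\<dots> = ennreal C * ennreal (c * ((a * b) powr (d / 2) * (a + b) powr (- \<alpha> / 2)))"
      by (subst nn_integral_cmult, simp add: measurable_cong_sets[OF sets_noise_cov[OF N] refl],
          subst gauss[OF a b]) (simp add: d_def)
    also have "C * (c * ((a * b) powr (d / 2) * (a + b) powr (- \<alpha> / 2))) = K * time_cov lam \<alpha> u v"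
    proof -
      have "(pi * a) powr (- d / 2) * (pi * b) powr (- d / 2) * (a * b) powr (d / 2) = pi powr (- d)"
        using a b by (simp add: powr_mult powr_add[symmetric] mult_ac)
      moreover have "(a + b) powr (- \<alpha> / 2) = (2 * \<kappa>) powr (- \<alpha> / 2) * (u + v) powr (- \<alpha> / 2)"
        using True \<kappa> by (simp add: a_def b_def powr_mult[symmetric] distrib_left)
      ultimately show ?thesis
        using True unfolding C_def K_def time_cov_def cov_profile_def by (simp add: mult_ac)
    qed
    then have "ennreal C * ennreal (c * ((a * b) powr (d / 2) * (a + b) powr (- \<alpha> / 2))) = ennreal (K * time_cov lam \<alpha> u v)"
      using C c by (simp add: ennreal_mult[symmetric])
    finally show ?thesis .
  qed
  moreover have "K > 0" using c \<kappa> by (simp add: K_def)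
  ultimately show ?thesis by blast
qed

lemma nn_integral_cov_profile_finite:
  assumes lam: "lam > 0" and \<alpha>: "\<alpha> < 2"
  shows "(\<integral>\<^sup>+u. ennreal (cov_profile lam \<alpha> u) \<partial>lborel) < \<infinity>"
proof -
  have "cov_profile lam \<alpha> (0 + (1 / lam) * x)
      = lam powr (\<alpha> / 2) * (indicator {0..} x * (x powr (- (\<alpha> / 2)) * exp (- x)))" for x
    using lam by (cases "x > 0")
      (auto simp: cov_profile_def indicator_def powr_divide powr_minus_divide field_simps)
  then have "(\<integral>\<^sup>+u. ennreal (cov_profile lam \<alpha> u) \<partial>lborel)
      = ennreal (1 / lam) * (ennreal (lam powr (\<alpha> / 2))
          * (\<integral>\<^sup>+x. ennreal (indicator {0..} x * (x powr (- (\<alpha> / 2)) * exp (- x))) \<partial>lborel))"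
    using lam by (subst nn_integral_real_affine[where c="1 / lam" and t=0])
      (simp_all add: ennreal_mult nn_integral_cmult)
  then show ?thesis
    using \<alpha> by (simp add: nn_integral_powr_exp_eq_Gamma ennreal_mult_less_top)
qed

lemma integrable_cov_profile:
  assumes "lam > 0" "\<alpha> < 2"
  shows "integrable lborel (cov_profile lam \<alpha>)"
  using nn_integral_cov_profile_finite[OF assms] by (intro integrableI_nonneg) (simp_all add: cov_profile_nonneg)

lemma integral_cov_profile_lower:
  assumes lam: "lam > 0" and \<alpha>: "0 < \<alpha>" "\<alpha> < 2" and \<Delta>: "0 < \<Delta>" "\<Delta> \<le> 1"
  shows "exp (- lam) * \<Delta> powr (1 - \<alpha> / 2) \<le> (\<integral>u. indicator {..\<Delta>} u * cov_profile lam \<alpha> u \<partial>lborel)"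
proof -
  define c where "c = exp (- lam) * \<Delta> powr (- \<alpha> / 2)"
  have "exp (- lam) * \<Delta> powr (1 - \<alpha> / 2) = (\<integral>u. indicator {0<..\<Delta>} u * c \<partial>lborel)"
    using \<Delta> powr_add[of \<Delta> 1 "- \<alpha> / 2"] by (simp add: c_def mult_ac)
  also have "\<dots> \<le> (\<integral>u. indicator {..\<Delta>} u * cov_profile lam \<alpha> u \<partial>lborel)"
  proof (rule integral_mono)
    show "integrable lborel (\<lambda>u. indicator {0<..\<Delta>} u * c)"
      using \<Delta> by (intro integrable_mult_left integrable_real_indicator) simp_all
    show "integrable lborel (\<lambda>u. indicator {..\<Delta>} u * cov_profile lam \<alpha> u)"
      using integrable_mult_indicator[OF _ integrable_cov_profile[OF lam \<alpha>(2)], of "{..\<Delta>}"] by simp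
    fix u :: real
    have "c \<le> cov_profile lam \<alpha> u" if "0 < u" "u \<le> \<Delta>"
    proof -
      have "exp (- lam) \<le> exp (- lam * u)" using that \<Delta> lam by (simp add: mult_le_cancel_left1)
      moreover have "\<Delta> powr (- \<alpha> / 2) \<le> u powr (- \<alpha> / 2)" using that \<alpha> by (intro powr_mono2') auto
      ultimately show ?thesis using that unfolding c_def cov_profile_def by (simp add: mult_mono)
    qed
    then show "indicator {0<..\<Delta>} u * c \<le> indicator {..\<Delta>} u * cov_profile lam \<alpha> u"
      by (auto simp: indicator_def cov_profile_nonneg)
  qed
  finally show ?thesis .
qed

definition heat_profile :: "real \<Rightarrow> real \<Rightarrow> real \<Rightarrow> real \<Rightarrow> real \<Rightarrow> real" where
  "heat_profile d \<kappa> lam r t = (2 * pi * \<kappa> * t) powr (- d / 2) * exp (- r / (2 * \<kappa> * t) - lam * t)"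

lemma heatG_eq_heat_profile:
  "t > 0 \<Longrightarrow> heatG \<kappa> lam (y::'a::euclidean_space) t = heat_profile (real DIM('a)) \<kappa> lam ((norm y)\<^sup>2) t"
  unfolding heatG_def heat_profile_def by simp

lemma heat_profile_has_real_derivative:
  assumes \<kappa>: "\<kappa> > 0" and t: "t > 0"
  shows "(heat_profile d \<kappa> lam r has_real_derivative
      heat_profile d \<kappa> lam r t * (- d / (2 * t) + r / (2 * \<kappa> * t\<^sup>2) - lam)) (at t)"
proof -
  have D: "(heat_profile d \<kappa> lam r has_real_derivative
     (- d / 2) * (2 * pi * \<kappa> * t) powr (- d / 2 - 1) * (2 * pi * \<kappa>) * exp (- r / (2 * \<kappa> * t) - lam * t)
     + (2 * pi * \<kappa> * t) powr (- d / 2) * (exp (- r / (2 * \<kappa> * t) - lam * t) * (r / (2 * \<kappa> * t\<^sup>2) - lam))) (at t)"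
    unfolding heat_profile_def[abs_def] using \<kappa> t
    by (auto intro!: derivative_eq_intros simp: power2_eq_square field_simps)
  have "(- d / 2) * (2 * pi * \<kappa> * t) powr (- d / 2 - 1) * (2 * pi * \<kappa>)
      = (2 * pi * \<kappa> * t) powr (- d / 2) * (- d / (2 * t))"
    using \<kappa> t by (simp add: powr_diff)
  then show ?thesis using D by (simp add: heat_profile_def algebra_simps)
qed

lemma le_exp_half: "0 \<le> (x::real) \<Longrightarrow> x \<le> exp (x / 2)"
proof -
  assume "0 \<le> x"
  have "x \<le> (1 + x / 4)\<^sup>2" using zero_le_power2[of "1 - x / 4"] by (simp add: power2_eq_square algebra_simps)
  also have "\<dots> \<le> (exp (x / 4))\<^sup>2" using exp_ge_add_one_self[of "x / 4"] \<open>0 \<le> x\<close> by (intro power_mono) auto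
  also have "\<dots> = exp (x / 2)" by (simp add: power2_eq_square exp_add[symmetric])
  finally show ?thesis .
qed

lemma mult_exp_neg_le: "0 \<le> (x::real) \<Longrightarrow> x * exp (- x) \<le> exp (- x / 2)"
  using mult_right_mono[OF le_exp_half, of x "exp (- x)"] by (simp add: exp_add[symmetric])

lemma heat_normalisation_le:
  fixes \<kappa> d s \<xi> :: real
  assumes \<kappa>: "\<kappa> > 0" and d: "d \<ge> 0" and s: "s > 0" and \<xi>: "s / 2 \<le> \<xi>"
  shows "(2 * pi * \<kappa> * \<xi>) powr (- d / 2) \<le> 2 powr d * (4 * pi * \<kappa> * s) powr (- d / 2)"
proof -
  have "(2 * pi * \<kappa> * \<xi>) powr (- d / 2) \<le> ((1 / 4) * (4 * pi * \<kappa> * s)) powr (- d / 2)"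
    using \<kappa> s \<xi> d by (intro powr_mono2') auto
  also have "\<dots> = (1 / 4) powr (- d / 2) * (4 * pi * \<kappa> * s) powr (- d / 2)"
    using \<kappa> s by (intro powr_mult)
  also have "(1 / 4 :: real) powr (- d / 2) = 2 powr d"
    by (simp add: powr_minus_divide powr_divide powr_powr flip: powr_numeral)
  finally show ?thesis .
qed

lemma heat_exponent_derivative_le:
  fixes \<kappa> r s \<xi> :: real
  assumes \<kappa>: "\<kappa> > 0" and r: "r \<ge> 0" and s: "s > 0" and \<xi>: "s / 2 \<le> \<xi>" "\<xi> \<le> s"
  shows "r / (2 * \<kappa> * \<xi>\<^sup>2) * exp (- r / (2 * \<kappa> * \<xi>)) \<le> (2 / s) * exp (- r / (4 * \<kappa> * s))"
proof -
  define x where "x = r / (2 * \<kappa> * \<xi>)"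
  have \<xi>0: "\<xi> > 0" using \<xi> s by linarith
  have x0: "x \<ge> 0" using r \<kappa> \<xi>0 by (simp add: x_def)
  have "r / (2 * \<kappa> * \<xi>\<^sup>2) * exp (- r / (2 * \<kappa> * \<xi>)) = (1 / \<xi>) * (x * exp (- x))"
    using \<xi>0 \<kappa> by (simp add: x_def power2_eq_square field_simps)
  also have "\<dots> \<le> (2 / s) * exp (- x / 2)"
    using mult_exp_neg_le[OF x0] \<xi> \<xi>0 s x0 by (intro mult_mono) (auto simp: field_simps)
  also have "exp (- x / 2) \<le> exp (- r / (4 * \<kappa> * s))"
    unfolding x_def using r \<kappa> \<xi>0 \<xi> s by (simp add: frac_le)
  then have "(2 / s) * exp (- x / 2) \<le> (2 / s) * exp (- r / (4 * \<kappa> * s))"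
    using s by (intro mult_left_mono) auto
  finally show ?thesis .
qed

lemma mult_exp_neg_mult_le:
  fixes lam s \<xi> :: real
  assumes lam: "lam \<ge> 0" and s: "s > 0" and \<xi>: "s / 2 \<le> \<xi>"
  shows "lam * exp (- lam * \<xi>) \<le> 2 / s"
proof -
  have \<xi>0: "\<xi> > 0" using \<xi> s by linarith
  have "lam * exp (- lam * \<xi>) = (1 / \<xi>) * ((lam * \<xi>) * exp (- (lam * \<xi>)))"
    using \<xi>0 by simp
  also have "\<dots> \<le> (1 / \<xi>) * 1"
    using mult_exp_neg_le[of "lam * \<xi>"] lam \<xi>0
    by (intro mult_left_mono) (auto intro: order_trans[OF _ exp_le_one_iff[THEN iffD2]])
  also have "\<dots> \<le> 2 / s" using \<xi> \<xi>0 s by (simp add: field_simps)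
  finally show ?thesis .
qed

text \<open>On \<open>[s/2, s]\<close> the time derivative of the heat kernel is dominated by \<open>1/s\<close> times a
  heat kernel at time \<open>2s\<close>: the factors \<open>r/\<xi>\<^sup>2\<close> and \<open>lam\<close> produced by differentiation are absorbed
  by halving the exponents.\<close>
lemma heat_profile_deriv_bound:
  assumes \<kappa>: "\<kappa> > 0" and lam: "lam \<ge> 0" and d: "d \<ge> 0" and r: "r \<ge> 0"
    and s: "s > 0" and \<xi>: "s / 2 \<le> \<xi>" "\<xi> \<le> s"
  shows "\<bar>heat_profile d \<kappa> lam r \<xi> * (- d / (2 * \<xi>) + r / (2 * \<kappa> * \<xi>\<^sup>2) - lam)\<bar>
    \<le> (d + 4) * 2 powr d / s * heat_profile d \<kappa> 0 r (2 * s)"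
proof -
  have \<xi>0: "\<xi> > 0" using \<xi> s by linarith
  define P where "P = (2 * pi * \<kappa> * \<xi>) powr (- d / 2)"
  define Q where "Q = (4 * pi * \<kappa> * s) powr (- d / 2)"
  define E where "E = exp (- r / (2 * \<kappa> * \<xi>))"
  define E' where "E' = exp (- r / (4 * \<kappa> * s))"
  define L where "L = exp (- lam * \<xi>)"
  define R where "R = r / (2 * \<kappa> * \<xi>\<^sup>2)"
  have pos: "P \<ge> 0" "E \<ge> 0" "L \<ge> 0" "E' \<ge> 0" "R \<ge> 0"
    using \<kappa> r \<xi>0 by (simp_all add: P_def E_def L_def E'_def R_def)
  have hE: "E \<le> E'" unfolding E_def E'_def using r \<kappa> \<xi>0 \<xi> s by (simp add: frac_le)
  have hL: "L \<le> 1" unfolding L_def using lam \<xi>0 by simp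
  have hd: "d / (2 * \<xi>) \<le> d / s" using d \<xi> \<xi>0 s by (intro divide_left_mono) auto
  have hR: "R * E \<le> (2 / s) * E'"
    using heat_exponent_derivative_le[OF \<kappa> r s \<xi>] by (simp add: R_def E_def E'_def)
  have hlam: "lam * L \<le> 2 / s" unfolding L_def by (rule mult_exp_neg_mult_le[OF lam s \<xi>(1)])
  have "\<bar>heat_profile d \<kappa> lam r \<xi> * (- d / (2 * \<xi>) + R - lam)\<bar> \<le> P * E * L * (d / (2 * \<xi>) + R + lam)"
    using pos d \<xi>0 lam
    by (auto simp: heat_profile_def P_def E_def L_def exp_diff exp_minus abs_mult abs_le_iff
        field_simps intro!: mult_left_mono)
  also have "\<dots> = P * ((d / (2 * \<xi>)) * E * L + L * (R * E) + E * (lam * L))"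
    by (simp add: algebra_simps)
  also have "\<dots> \<le> P * ((d / s) * E' * 1 + 1 * ((2 / s) * E') + E' * (2 / s))"
  proof -
    have "(d / (2 * \<xi>)) * E * L \<le> (d / s) * E' * 1"
      using pos hE hL hd d \<xi>0 s by (intro mult_mono) auto
    moreover have "L * (R * E) \<le> 1 * ((2 / s) * E')"
      using pos by (intro mult_mono[OF hL hR]) auto
    moreover have "E * (lam * L) \<le> E' * (2 / s)"
      using pos lam by (intro mult_mono[OF hE hlam]) auto
    ultimately show ?thesis using pos by (intro mult_left_mono add_mono)
  qed
  also have "\<dots> = P * ((d + 4) / s * E')" by (simp add: field_simps add_divide_distrib)
  also have "\<dots> \<le> 2 powr d * Q * ((d + 4) / s * E')"
    using heat_normalisation_le[OF \<kappa> d s \<xi>(1)] pos d s unfolding P_def Q_def by (intro mult_right_mono) auto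
  also have "\<dots> = (d + 4) * 2 powr d / s * heat_profile d \<kappa> 0 r (2 * s)"
    by (simp add: heat_profile_def Q_def E'_def mult_ac)
  finally show ?thesis by (simp add: R_def)
qed

lemma dG_abs_le:
  assumes \<kappa>: "\<kappa> > 0" and lam: "lam \<ge> 0" and \<Delta>: "\<Delta> > 0" and s: "2 * \<Delta> \<le> s"
  shows "\<bar>dG \<kappa> lam \<Delta> (y::'a::euclidean_space) s\<bar>
    \<le> \<Delta> * ((real DIM('a) + 4) * 2 powr real DIM('a) / s) * heatG \<kappa> 0 y (2 * s)"
proof -
  define d where "d = real DIM('a)"
  define r where "r = (norm y)\<^sup>2"
  define g where "g = heat_profile d \<kappa> lam r"
  have s0: "s > 0" and s\<Delta>: "s - \<Delta> > 0" using \<Delta> s by linarith+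
  obtain \<xi> where \<xi>: "s - \<Delta> < \<xi>" "\<xi> < s"
    and mvt: "g s - g (s - \<Delta>) = (s - (s - \<Delta>)) * (g \<xi> * (- d / (2 * \<xi>) + r / (2 * \<kappa> * \<xi>\<^sup>2) - lam))"
    using MVT2[of "s - \<Delta>" s g "\<lambda>t. g t * (- d / (2 * t) + r / (2 * \<kappa> * t\<^sup>2) - lam)"]
      heat_profile_has_real_derivative[OF \<kappa>] s\<Delta> \<Delta> unfolding g_def by force
  have "\<bar>dG \<kappa> lam \<Delta> y s\<bar> = \<Delta> * \<bar>g \<xi> * (- d / (2 * \<xi>) + r / (2 * \<kappa> * \<xi>\<^sup>2) - lam)\<bar>"
    using mvt s0 s\<Delta> \<Delta> by (simp add: dG_def heatG_eq_heat_profile g_def d_def r_def abs_mult)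
  also have "\<dots> \<le> \<Delta> * ((d + 4) * 2 powr d / s * heat_profile d \<kappa> 0 r (2 * s))"
    using \<Delta> \<xi> s unfolding g_def
    by (intro mult_left_mono heat_profile_deriv_bound \<kappa> lam) (auto simp: d_def r_def)
  finally show ?thesis using s0 by (simp add: heatG_eq_heat_profile d_def r_def mult_ac)
qed

section \<open>Tail estimates for \<open>|\<Pi>|\<close>\<close>

lemma nn_integral_powr_atLeast:
  assumes a: "a > 0" and q: "q > 1"
  shows "(\<integral>\<^sup>+x. ennreal (x powr (- q)) * indicator {a..} x \<partial>lborel) = ennreal (a powr (1 - q) / (q - 1))"
proof -
  have "(\<integral>\<^sup>+x. ennreal (x powr (- q)) * indicator {a..} x \<partial>lborel) = 0 - (- (a powr (1 - q)) / (q - 1))"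
  proof (rule nn_integral_FTC_atLeast)
    fix x assume "a \<le> x"
    then have "x > 0" using a by simp
    have "((\<lambda>x. - (x powr (1 - q)) / (q - 1)) has_real_derivative - ((1 - q) * x powr (1 - q - 1)) / (q - 1)) (at x)"
      by (intro DERIV_cdivide DERIV_minus has_real_derivative_powr \<open>x > 0\<close>)
    moreover have "- ((1 - q) * x powr (1 - q - 1)) / (q - 1) = x powr (- q)" using q by (simp add: field_simps)
    ultimately show "((\<lambda>x. - (x powr (1 - q)) / (q - 1)) has_real_derivative x powr (- q)) (at x)" by simp
  next
    have "((\<lambda>x. x powr (1 - q)) \<longlongrightarrow> 0) at_top"
      using q by (intro tendsto_neg_powr filterlim_ident) auto
    then show "((\<lambda>x. - (x powr (1 - q)) / (q - 1)) \<longlongrightarrow> 0) at_top"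
      using tendsto_divide[OF tendsto_minus tendsto_const, of _ 0 at_top "q - 1"] q by simp
  qed simp_all
  then show ?thesis by simp
qed

lemma powr_ge_two_powr_if_powr_gt_half:
  fixes \<delta> \<theta> e :: real
  assumes "0 < \<delta>" "0 < \<theta>" "1 / 2 < \<delta> powr \<theta>" "0 \<le> e"
  shows "2 powr (- e / \<theta>) \<le> \<delta> powr e"
proof -
  have "2 powr (- e / \<theta>) = (1 / 2) powr (e / \<theta>)"
    by (simp add: powr_minus_divide powr_divide)
  also have "\<dots> \<le> (\<delta> powr \<theta>) powr (e / \<theta>)"
    using assms by (intro powr_mono2) auto
  also have "\<dots> = \<delta> powr e" using assms by (simp add: powr_powr)
  finally show ?thesis .
qed

lemma lborel_integral_affine_two:
  fixes f :: "real \<Rightarrow> real"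
  shows "(\<integral>s. f (t + 2 * s) \<partial>lborel) = (\<integral>u. f u \<partial>lborel) / 2"
  using lborel_integral_real_affine[of 2 f t] by simp

lemma abs_diff_mult_abs_diff_le:
  fixes a b c d :: real
  assumes "0 \<le> a" "0 \<le> b" "0 \<le> c" "0 \<le> d"
  shows "\<bar>a - b\<bar> * \<bar>c - d\<bar> \<le> a * c + a * d + b * c + b * d"
proof -
  have "\<bar>a - b\<bar> * \<bar>c - d\<bar> \<le> (a + b) * (c + d)" using assms by (intro mult_mono) auto
  then show ?thesis by (simp add: algebra_simps)
qed

definition tail_mass :: "real \<Rightarrow> real \<Rightarrow> ('a::euclidean_space \<times> 'a) measure \<Rightarrow> real \<Rightarrow> real \<Rightarrow> ennreal" where
  "tail_mass \<kappa> lam \<Lambda> \<Delta> a =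
     (\<integral>\<^sup>+s. \<integral>\<^sup>+p. indicator {a<..} s * ennreal (\<bar>dG \<kappa> lam \<Delta> (fst p) s\<bar> * \<bar>dG \<kappa> lam \<Delta> (snd p) s\<bar>) \<partial>\<Lambda> \<partial>lborel)"

locale heat_noise =
  fixes \<kappa> \<alpha> K :: real and \<Lambda> :: "('a::euclidean_space \<times> 'a) measure"
  assumes \<kappa>_pos: "\<kappa> > 0" and \<alpha>_pos: "0 < \<alpha>" and \<alpha>_less_2: "\<alpha> < 2" and K_pos: "K > 0"
    and sets_\<Lambda>: "sets \<Lambda> = sets (borel \<Otimes>\<^sub>M borel)"
    and sigma_finite_\<Lambda>: "sigma_finite_measure \<Lambda>"
    and heat_product: "\<And>lam u v. (\<integral>\<^sup>+p. ennreal (heatG \<kappa> lam (fst p) u * heatG \<kappa> lam (snd p) v) \<partial>\<Lambda>)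
        = ennreal (K * time_cov lam \<alpha> u v)"

lemma noise_cov_heat_noise:
  assumes N: "noise_cov \<alpha> (\<Lambda> :: ('a::euclidean_space \<times> 'a) measure)" and "\<kappa> > 0" "\<alpha> < 2"
  shows "\<exists>K. heat_noise \<kappa> \<alpha> K \<Lambda>"
proof -
  obtain K where "K > 0" "\<And>lam u v. (\<integral>\<^sup>+p. ennreal (heatG \<kappa> lam (fst p) u * heatG \<kappa> lam (snd p) v) \<partial>\<Lambda>)
      = ennreal (K * time_cov lam \<alpha> u v)"
    using noise_cov_heat_product[OF N \<open>\<kappa> > 0\<close>] by blast
  moreover have "0 < \<alpha>" using N unfolding noise_cov_def by auto
  ultimately show ?thesis
    using assms sets_noise_cov[OF N] sigma_finite_noise_cov[OF N] by (auto simp: heat_noise_def)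
qed

context heat_noise
begin

lemma measurable_\<Lambda>: "f \<in> borel_measurable (borel \<Otimes>\<^sub>M borel) \<Longrightarrow> f \<in> borel_measurable \<Lambda>"
  by (simp add: measurable_cong_sets[OF sets_\<Lambda> refl])

lemma measurable_\<Lambda>_lborel:
  "f \<in> borel_measurable ((borel \<Otimes>\<^sub>M borel) \<Otimes>\<^sub>M (borel :: real measure)) \<Longrightarrow> f \<in> borel_measurable (\<Lambda> \<Otimes>\<^sub>M lborel)"
  by (simp add: measurable_cong_sets[OF sets_pair_measure_cong[OF sets_\<Lambda> sets_lborel] refl])

lemma has_bochner_integral_heat_product:
  "has_bochner_integral \<Lambda> (\<lambda>p. heatG \<kappa> lam (fst p) u * heatG \<kappa> lam (snd p) v) (K * time_cov lam \<alpha> u v)"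
  using K_pos by (intro has_bochner_integral_nn_integral measurable_\<Lambda>)
    (simp_all add: heat_product heatG_nonneg time_cov_nonneg)

lemma integral_dG_product:
  "(LINT p|\<Lambda>. dG \<kappa> lam \<Delta> (fst p) s * dG \<kappa> lam \<Delta> (snd p) s)
     = K * (time_cov lam \<alpha> s s - time_cov lam \<alpha> s (s - \<Delta>) - time_cov lam \<alpha> (s - \<Delta>) s
            + time_cov lam \<alpha> (s - \<Delta>) (s - \<Delta>))"
proof -
  let ?h = "\<lambda>u v (p :: 'a \<times> 'a). heatG \<kappa> lam (fst p) u * heatG \<kappa> lam (snd p) v"
  have "(\<lambda>p :: 'a \<times> 'a. dG \<kappa> lam \<Delta> (fst p) s * dG \<kappa> lam \<Delta> (snd p) s)
      = (\<lambda>p. ?h s s p - ?h s (s - \<Delta>) p - ?h (s - \<Delta>) s p + ?h (s - \<Delta>) (s - \<Delta>) p)"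
    by (simp add: dG_def algebra_simps)
  moreover have "has_bochner_integral \<Lambda> (\<lambda>p. ?h s s p - ?h s (s - \<Delta>) p - ?h (s - \<Delta>) s p + ?h (s - \<Delta>) (s - \<Delta>) p)
      (K * time_cov lam \<alpha> s s - K * time_cov lam \<alpha> s (s - \<Delta>) - K * time_cov lam \<alpha> (s - \<Delta>) s
       + K * time_cov lam \<alpha> (s - \<Delta>) (s - \<Delta>))"
    by (intro has_bochner_integral_add has_bochner_integral_diff has_bochner_integral_heat_product)
  ultimately have "has_bochner_integral \<Lambda> (\<lambda>p. dG \<kappa> lam \<Delta> (fst p) s * dG \<kappa> lam \<Delta> (snd p) s)
      (K * time_cov lam \<alpha> s s - K * time_cov lam \<alpha> s (s - \<Delta>) - K * time_cov lam \<alpha> (s - \<Delta>) s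
       + K * time_cov lam \<alpha> (s - \<Delta>) (s - \<Delta>))"
    by (simp only:)
  then show ?thesis by (simp add: has_bochner_integral_integral_eq right_diff_distrib distrib_left)
qed

lemma tau2_eq_integral_cov_profile:
  assumes lam: "lam > 0" and \<Delta>: "\<Delta> > 0"
  shows "tau2 \<kappa> lam \<Lambda> \<Delta> = K * (\<integral>u. indicator {..\<Delta>} u * cov_profile lam \<alpha> u \<partial>lborel)"
proof -
  define \<Phi> where "\<Phi> = cov_profile lam \<alpha>"
  define \<Psi> where "\<Psi> u = indicator {\<Delta><..} u * \<Phi> u" for u
  have I\<Phi>: "integrable lborel \<Phi>" using integrable_cov_profile[OF lam \<alpha>_less_2] by (simp add: \<Phi>_def)
  have I\<Psi>: "integrable lborel \<Psi>" using integrable_mult_indicator[OF _ I\<Phi>, of "{\<Delta><..}"] by (simp add: \<Psi>_def[abs_def])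
  have "indicator {0<..} s * (time_cov lam \<alpha> s s - time_cov lam \<alpha> s (s - \<Delta>) - time_cov lam \<alpha> (s - \<Delta>) s
        + time_cov lam \<alpha> (s - \<Delta>) (s - \<Delta>))
      = \<Phi> (0 + 2 * s) - 2 * \<Psi> (- \<Delta> + 2 * s) + \<Phi> (- 2 * \<Delta> + 2 * s)" for s
  proof -
    have "s + s = 0 + 2 * s" "s + (s - \<Delta>) = - \<Delta> + 2 * s" "s - \<Delta> + s = - \<Delta> + 2 * s"
      "s - \<Delta> + (s - \<Delta>) = - 2 * \<Delta> + 2 * s" by simp_all
    then show ?thesis using \<Delta>
      by (cases "s > \<Delta>"; cases "s > 0") (simp_all add: time_cov_def \<Phi>_def \<Psi>_def cov_profile_def indicator_def)
  qed
  then have "tau2 \<kappa> lam \<Lambda> \<Delta>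
      = (\<integral>s. K * (\<Phi> (0 + 2 * s) - 2 * \<Psi> (- \<Delta> + 2 * s) + \<Phi> (- 2 * \<Delta> + 2 * s)) \<partial>lborel)"
    unfolding tau2_def set_lebesgue_integral_def by (simp add: integral_dG_product mult.left_commute)
  also have "\<dots> = K * ((\<integral>u. \<Phi> u \<partial>lborel) - (\<integral>u. \<Psi> u \<partial>lborel))"
    using lborel_integrable_real_affine[OF I\<Phi>, of 2 0] lborel_integrable_real_affine[OF I\<Psi>, of 2 "- \<Delta>"]
      lborel_integrable_real_affine[OF I\<Phi>, of 2 "- 2 * \<Delta>"] lborel_integral_affine_two[of \<Phi> 0]
      lborel_integral_affine_two[of \<Psi> "- \<Delta>"] lborel_integral_affine_two[of \<Phi> "- 2 * \<Delta>"]
    by simp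
  also have "(\<integral>u. \<Phi> u \<partial>lborel) - (\<integral>u. \<Psi> u \<partial>lborel) = (\<integral>u. indicator {..\<Delta>} u * cov_profile lam \<alpha> u \<partial>lborel)"
    using I\<Phi> I\<Psi> by (subst Bochner_Integration.integral_diff[symmetric])
      (auto intro!: Bochner_Integration.integral_cong simp: \<Psi>_def \<Phi>_def indicator_def)
  finally show ?thesis .
qed

lemma tau2_lower_bound:
  assumes lam: "lam > 0" and \<Delta>: "0 < \<Delta>" "\<Delta> \<le> 1"
  shows "K * exp (- lam) * \<Delta> powr (1 - \<alpha> / 2) \<le> tau2 \<kappa> lam \<Lambda> \<Delta>"
  using integral_cov_profile_lower[OF lam \<alpha>_pos \<alpha>_less_2 \<Delta>] K_pos
  by (simp add: tau2_eq_integral_cov_profile[OF lam \<Delta>(1)] mult.assoc)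

lemma Pi_abs_le_tail_mass:
  assumes "tau2 \<kappa> lam \<Lambda> \<Delta> > 0"
  shows "Pi_abs \<kappa> lam \<Lambda> \<Delta> ({a<..} \<times> UNIV \<times> UNIV) \<le> ennreal (1 / tau2 \<kappa> lam \<Lambda> \<Delta>) * tail_mass \<kappa> lam \<Lambda> \<Delta> a"
proof -
  interpret sigma_finite_measure \<Lambda> by (rule sigma_finite_\<Lambda>)
  interpret pair_sigma_finite \<Lambda> lborel ..
  define T where "T = tau2 \<kappa> lam \<Lambda> \<Delta>"
  define F where "F p s = indicator {a<..} s * ennreal (\<bar>dG \<kappa> lam \<Delta> (fst p) s\<bar> * \<bar>dG \<kappa> lam \<Delta> (snd p) s\<bar>)"
    for p :: "'a \<times> 'a" and s :: real
  have F: "case_prod F \<in> borel_measurable (\<Lambda> \<Otimes>\<^sub>M lborel)"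
    unfolding F_def dG_def split_beta' by (intro measurable_\<Lambda>_lborel) measurable
  have "Pi_abs \<kappa> lam \<Lambda> \<Delta> ({a<..} \<times> UNIV \<times> UNIV) \<le> (\<integral>\<^sup>+p. \<integral>\<^sup>+s. ennreal (1 / T) * F p s \<partial>lborel \<partial>\<Lambda>)"
    unfolding Pi_abs_def
  proof (intro nn_integral_mono)
    fix p :: "'a \<times> 'a" and s :: real
    show "indicator ({0<..} \<times> UNIV) (s, fst p, snd p) * indicator ({a<..} \<times> UNIV \<times> UNIV) (s, fst p, snd p)
        * ennreal (\<bar>dG \<kappa> lam \<Delta> (fst p) s\<bar> * \<bar>dG \<kappa> lam \<Delta> (snd p) s\<bar> / tau2 \<kappa> lam \<Lambda> \<Delta>)
      \<le> ennreal (1 / T) * F p s"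
      using assms by (auto simp: F_def T_def indicator_def ennreal_mult[symmetric] divide_inverse mult.commute)
  qed
  also have "\<dots> = (\<integral>\<^sup>+p. ennreal (1 / T) * (\<integral>\<^sup>+s. F p s \<partial>lborel) \<partial>\<Lambda>)"
    unfolding F_def dG_def by (intro nn_integral_cong nn_integral_cmult) measurable
  also have "\<dots> = ennreal (1 / T) * (\<integral>\<^sup>+p. \<integral>\<^sup>+s. F p s \<partial>lborel \<partial>\<Lambda>)"
    by (rule nn_integral_cmult) (rule lborel.borel_measurable_nn_integral[OF F])
  also have "(\<integral>\<^sup>+p. \<integral>\<^sup>+s. F p s \<partial>lborel \<partial>\<Lambda>) = (\<integral>\<^sup>+s. \<integral>\<^sup>+p. F p s \<partial>\<Lambda> \<partial>lborel)"
    using Fubini'[OF F] by simp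
  also have "\<dots> = tail_mass \<kappa> lam \<Lambda> \<Delta> a"
    by (simp add: tail_mass_def F_def)
  finally show ?thesis by (simp add: T_def)
qed

lemma nn_integral_abs_dG_product_le:
  assumes lam: "lam \<ge> 0" and \<Delta>: "\<Delta> > 0" and s: "2 * \<Delta> \<le> s"
  shows "(\<integral>\<^sup>+p. ennreal (\<bar>dG \<kappa> lam \<Delta> (fst p) s\<bar> * \<bar>dG \<kappa> lam \<Delta> (snd p) s\<bar>) \<partial>\<Lambda>)
    \<le> ennreal ((\<Delta> * ((real DIM('a) + 4) * 2 powr real DIM('a) / s))\<^sup>2 * (K * (4 * s) powr (- \<alpha> / 2)))"
proof -
  define c where "c = \<Delta> * ((real DIM('a) + 4) * 2 powr real DIM('a) / s)"
  have s0: "s > 0" using \<Delta> s by linarith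
  have c: "c \<ge> 0" using \<Delta> s0 by (simp add: c_def)
  have "(\<integral>\<^sup>+p. ennreal (\<bar>dG \<kappa> lam \<Delta> (fst p) s\<bar> * \<bar>dG \<kappa> lam \<Delta> (snd p) s\<bar>) \<partial>\<Lambda>)
      \<le> (\<integral>\<^sup>+p. ennreal (c\<^sup>2) * ennreal (heatG \<kappa> 0 (fst p :: 'a) (2 * s) * heatG \<kappa> 0 (snd p) (2 * s)) \<partial>\<Lambda>)"
  proof (intro nn_integral_mono)
    fix p :: "'a \<times> 'a"
    have "\<bar>dG \<kappa> lam \<Delta> y s\<bar> \<le> c * heatG \<kappa> 0 y (2 * s)" for y :: 'a
      using dG_abs_le[OF \<kappa>_pos lam \<Delta> s] by (simp add: c_def)
    then have "\<bar>dG \<kappa> lam \<Delta> (fst p) s\<bar> * \<bar>dG \<kappa> lam \<Delta> (snd p) s\<bar>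
        \<le> (c * heatG \<kappa> 0 (fst p) (2 * s)) * (c * heatG \<kappa> 0 (snd p) (2 * s))"
      using c by (intro mult_mono) (auto simp: heatG_nonneg)
    then show "ennreal (\<bar>dG \<kappa> lam \<Delta> (fst p) s\<bar> * \<bar>dG \<kappa> lam \<Delta> (snd p) s\<bar>)
        \<le> ennreal (c\<^sup>2) * ennreal (heatG \<kappa> 0 (fst p) (2 * s) * heatG \<kappa> 0 (snd p) (2 * s))"
      by (simp add: ennreal_mult[symmetric] heatG_nonneg power2_eq_square mult_ac ennreal_leI)
  qed
  also have "\<dots> = ennreal (c\<^sup>2) * ennreal (K * time_cov 0 \<alpha> (2 * s) (2 * s))"
    by (simp add: nn_integral_cmult measurable_\<Lambda> heat_product)
  also have "time_cov 0 \<alpha> (2 * s) (2 * s) = (4 * s) powr (- \<alpha> / 2)"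
    using s0 by (simp add: time_cov_def cov_profile_def)
  finally show ?thesis using K_pos by (simp add: c_def ennreal_mult[symmetric])
qed

lemma tail_mass_small_bound:
  obtains B where "B \<ge> 0"
    "\<And>lam \<Delta> a. 0 \<le> lam \<Longrightarrow> 0 < \<Delta> \<Longrightarrow> 2 * \<Delta> \<le> a \<Longrightarrow>
       tail_mass \<kappa> lam \<Lambda> \<Delta> a \<le> ennreal (B * \<Delta>\<^sup>2 * a powr (- (1 + \<alpha> / 2)))"
proof
  define q where "q = 2 + \<alpha> / 2"
  define C where "C = (real DIM('a) + 4) * 2 powr real DIM('a)"
  define B0 where "B0 = K * C\<^sup>2 * 4 powr (- \<alpha> / 2)"
  have q: "q > 1" using \<alpha>_pos by (simp add: q_def)
  have B0: "B0 \<ge> 0" using K_pos by (simp add: B0_def)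
  show "B0 / (q - 1) \<ge> 0" using B0 q by simp
  fix lam \<Delta> a :: real
  assume lam: "0 \<le> lam" and \<Delta>: "0 < \<Delta>" and a: "2 * \<Delta> \<le> a"
  have a0: "a > 0" using \<Delta> a by linarith
  have "tail_mass \<kappa> lam \<Lambda> \<Delta> a \<le> (\<integral>\<^sup>+s. ennreal (B0 * \<Delta>\<^sup>2) * (ennreal (s powr (- q)) * indicator {a..} s) \<partial>lborel)"
    unfolding tail_mass_def
  proof (intro nn_integral_mono)
    fix s :: real
    show "(\<integral>\<^sup>+p. indicator {a<..} s * ennreal (\<bar>dG \<kappa> lam \<Delta> (fst p) s\<bar> * \<bar>dG \<kappa> lam \<Delta> (snd p) s\<bar>) \<partial>\<Lambda>)
        \<le> ennreal (B0 * \<Delta>\<^sup>2) * (ennreal (s powr (- q)) * indicator {a..} s)"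
    proof (cases "s > a")
      case True
      then have s0: "s > 0" and s: "2 * \<Delta> \<le> s" using a0 a by linarith+
      have "s powr (- 2) = 1 / s\<^sup>2" using s0 by (simp add: powr_minus_divide powr_realpow)
      then have "(\<Delta> * (C / s))\<^sup>2 * (K * (4 * s) powr (- \<alpha> / 2))
          = B0 * \<Delta>\<^sup>2 * (s powr (- 2) * s powr (- \<alpha> / 2))"
        using s0 by (simp add: B0_def powr_mult power_mult_distrib power_divide)
      also have "s powr (- 2) * s powr (- \<alpha> / 2) = s powr (- q)"
        by (simp add: q_def powr_add[symmetric])
      finally show ?thesis
        using True nn_integral_abs_dG_product_le[OF lam \<Delta> s] B0
        by (simp add: C_def ennreal_mult[symmetric] mult.assoc)
    qed simp
  qed
  also have "\<dots> = ennreal (B0 * \<Delta>\<^sup>2) * ennreal (a powr (1 - q) / (q - 1))"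
    by (simp add: nn_integral_cmult nn_integral_powr_atLeast[OF a0 q])
  also have "\<dots> = ennreal (B0 / (q - 1) * \<Delta>\<^sup>2 * a powr (- (1 + \<alpha> / 2)))"
    using B0 q by (simp add: ennreal_mult[symmetric] q_def)
  finally show "tail_mass \<kappa> lam \<Lambda> \<Delta> a \<le> ennreal (B0 / (q - 1) * \<Delta>\<^sup>2 * a powr (- (1 + \<alpha> / 2)))" .
qed

lemma nn_integral_abs_dG_product_le_time_cov:
  "(\<integral>\<^sup>+p. ennreal (\<bar>dG \<kappa> lam \<Delta> (fst p) s\<bar> * \<bar>dG \<kappa> lam \<Delta> (snd p) s\<bar>) \<partial>\<Lambda>)
    \<le> ennreal (K * (time_cov lam \<alpha> s s + time_cov lam \<alpha> s (s - \<Delta>) + time_cov lam \<alpha> (s - \<Delta>) s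
        + time_cov lam \<alpha> (s - \<Delta>) (s - \<Delta>)))"
proof -
  let ?h = "\<lambda>u v (p :: 'a \<times> 'a). ennreal (heatG \<kappa> lam (fst p) u * heatG \<kappa> lam (snd p) v)"
  have "(\<integral>\<^sup>+p. ennreal (\<bar>dG \<kappa> lam \<Delta> (fst p) s\<bar> * \<bar>dG \<kappa> lam \<Delta> (snd p) s\<bar>) \<partial>\<Lambda>)
      \<le> (\<integral>\<^sup>+p. ?h s s p + ?h s (s - \<Delta>) p + ?h (s - \<Delta>) s p + ?h (s - \<Delta>) (s - \<Delta>) p \<partial>\<Lambda>)"
  proof (intro nn_integral_mono)
    fix p :: "'a \<times> 'a"
    have "\<bar>dG \<kappa> lam \<Delta> (fst p) s\<bar> * \<bar>dG \<kappa> lam \<Delta> (snd p) s\<bar>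
        \<le> heatG \<kappa> lam (fst p) s * heatG \<kappa> lam (snd p) s + heatG \<kappa> lam (fst p) s * heatG \<kappa> lam (snd p) (s - \<Delta>)
          + heatG \<kappa> lam (fst p) (s - \<Delta>) * heatG \<kappa> lam (snd p) s
          + heatG \<kappa> lam (fst p) (s - \<Delta>) * heatG \<kappa> lam (snd p) (s - \<Delta>)"
      unfolding dG_def by (rule abs_diff_mult_abs_diff_le) (simp_all add: heatG_nonneg)
    then show "ennreal (\<bar>dG \<kappa> lam \<Delta> (fst p) s\<bar> * \<bar>dG \<kappa> lam \<Delta> (snd p) s\<bar>)
        \<le> ?h s s p + ?h s (s - \<Delta>) p + ?h (s - \<Delta>) s p + ?h (s - \<Delta>) (s - \<Delta>) p"
      by (simp add: ennreal_plus[symmetric] heatG_nonneg ennreal_leI del: ennreal_plus)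
  qed
  also have "\<dots> = ennreal (K * (time_cov lam \<alpha> s s + time_cov lam \<alpha> s (s - \<Delta>) + time_cov lam \<alpha> (s - \<Delta>) s
      + time_cov lam \<alpha> (s - \<Delta>) (s - \<Delta>)))"
    using K_pos by (simp add: nn_integral_add measurable_\<Lambda> heat_product distrib_left time_cov_nonneg
        ennreal_plus[symmetric] del: ennreal_plus)
  finally show ?thesis .
qed

lemma tail_mass_le_integral_cov_profile:
  assumes lam: "lam > 0"
  shows "tail_mass \<kappa> lam \<Lambda> \<Delta> a \<le> ennreal (2 * K * (\<integral>u. cov_profile lam \<alpha> u \<partial>lborel))"
proof -
  define \<Phi> where "\<Phi> = cov_profile lam \<alpha>"
  define G where "G s = K * (\<Phi> (0 + 2 * s) + 2 * \<Phi> (- \<Delta> + 2 * s) + \<Phi> (- 2 * \<Delta> + 2 * s))" for s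
  have I\<Phi>: "integrable lborel \<Phi>" using integrable_cov_profile[OF lam \<alpha>_less_2] by (simp add: \<Phi>_def)
  have IG: "integrable lborel G"
    unfolding G_def using I\<Phi>
    by (intro integrable_mult_right Bochner_Integration.integrable_add lborel_integrable_real_affine) simp_all
  have G: "G s \<ge> 0" for s using K_pos by (simp add: G_def \<Phi>_def cov_profile_nonneg)
  have "tail_mass \<kappa> lam \<Lambda> \<Delta> a \<le> (\<integral>\<^sup>+s. ennreal (G s) \<partial>lborel)"
    unfolding tail_mass_def
  proof (intro nn_integral_mono)
    fix s :: real
    have "s + s = 0 + 2 * s" "s + (s - \<Delta>) = - \<Delta> + 2 * s" "s - \<Delta> + s = - \<Delta> + 2 * s"
      "s - \<Delta> + (s - \<Delta>) = - 2 * \<Delta> + 2 * s" by simp_all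
    then have "time_cov lam \<alpha> s s + time_cov lam \<alpha> s (s - \<Delta>) + time_cov lam \<alpha> (s - \<Delta>) s
        + time_cov lam \<alpha> (s - \<Delta>) (s - \<Delta>) \<le> \<Phi> (0 + 2 * s) + 2 * \<Phi> (- \<Delta> + 2 * s) + \<Phi> (- 2 * \<Delta> + 2 * s)"
      using time_cov_le_cov_profile[of lam \<alpha> s s] time_cov_le_cov_profile[of lam \<alpha> s "s - \<Delta>"]
        time_cov_le_cov_profile[of lam \<alpha> "s - \<Delta>" s] time_cov_le_cov_profile[of lam \<alpha> "s - \<Delta>" "s - \<Delta>"]
      unfolding \<Phi>_def by simp
    then have "ennreal (K * (time_cov lam \<alpha> s s + time_cov lam \<alpha> s (s - \<Delta>) + time_cov lam \<alpha> (s - \<Delta>) s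
        + time_cov lam \<alpha> (s - \<Delta>) (s - \<Delta>))) \<le> ennreal (G s)"
      unfolding G_def using K_pos by (intro ennreal_leI mult_left_mono) auto
    then show "(\<integral>\<^sup>+p. indicator {a<..} s * ennreal (\<bar>dG \<kappa> lam \<Delta> (fst p) s\<bar> * \<bar>dG \<kappa> lam \<Delta> (snd p) s\<bar>) \<partial>\<Lambda>)
        \<le> ennreal (G s)"
      using nn_integral_abs_dG_product_le_time_cov[of lam \<Delta> s]
      by (cases "s > a") (simp_all add: indicator_def)
  qed
  also have "(\<integral>\<^sup>+s. ennreal (G s) \<partial>lborel) = ennreal (\<integral>s. G s \<partial>lborel)"
    using IG G by (intro nn_integral_eq_integral) auto
  also have "(\<integral>s. G s \<partial>lborel) = 2 * K * (\<integral>u. cov_profile lam \<alpha> u \<partial>lborel)"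
    unfolding G_def
    using lborel_integrable_real_affine[OF I\<Phi>, of 2 0] lborel_integrable_real_affine[OF I\<Phi>, of 2 "- \<Delta>"]
      lborel_integrable_real_affine[OF I\<Phi>, of 2 "- 2 * \<Delta>"] lborel_integral_affine_two[of \<Phi> 0]
      lborel_integral_affine_two[of \<Phi> "- \<Delta>"] lborel_integral_affine_two[of \<Phi> "- 2 * \<Delta>"]
    by (simp add: \<Phi>_def)
  finally show ?thesis .
qed

lemma tail_mass_powr_bound:
  assumes lam: "lam > 0" and \<theta>: "0 < \<theta>" "\<theta> < 1"
  obtains C where "C \<ge> 0"
    "\<And>\<delta>. 0 < \<delta> \<Longrightarrow> \<delta> < 1 \<Longrightarrow>
       tail_mass \<kappa> lam \<Lambda> \<delta> (\<delta> powr (1 - \<theta>)) \<le> ennreal (C * \<delta> powr (1 - \<alpha> / 2) * \<delta> powr ((1 + \<alpha> / 2) * \<theta>))"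
proof -
  obtain B where B: "B \<ge> 0" and small: "\<And>\<Delta> a. 0 < \<Delta> \<Longrightarrow> 2 * \<Delta> \<le> a \<Longrightarrow>
      tail_mass \<kappa> lam \<Lambda> \<Delta> a \<le> ennreal (B * \<Delta>\<^sup>2 * a powr (- (1 + \<alpha> / 2)))"
    using tail_mass_small_bound lam by (metis less_imp_le)
  define e where "e = (1 - \<alpha> / 2) + (1 + \<alpha> / 2) * \<theta>"
  define M where "M = 2 * K * (\<integral>u. cov_profile lam \<alpha> u \<partial>lborel)"
  define C where "C = B + M * 2 powr (e / \<theta>)"
  have e: "e \<ge> 0" using \<alpha>_less_2 \<alpha>_pos \<theta> by (simp add: e_def)
  have M: "M \<ge> 0" using K_pos by (simp add: M_def cov_profile_nonneg)
  have C: "C \<ge> 0" using B M by (simp add: C_def)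
  show thesis
  proof (rule that[OF C])
    fix \<delta> :: real assume \<delta>: "0 < \<delta>" "\<delta> < 1"
    define a where "a = \<delta> powr (1 - \<theta>)"
    have P: "\<delta> powr (1 - \<alpha> / 2) * \<delta> powr ((1 + \<alpha> / 2) * \<theta>) = \<delta> powr e"
      by (simp add: e_def powr_add)
    have "tail_mass \<kappa> lam \<Lambda> \<delta> a \<le> ennreal (C * \<delta> powr e)"
    proof (cases "\<delta> powr \<theta> \<le> 1 / 2")
      case True
      have "\<delta> = \<delta> powr \<theta> * a" unfolding a_def using \<delta> by (simp add: powr_add[symmetric])
      also have "\<dots> \<le> 1 / 2 * a" using True by (intro mult_right_mono) (auto simp: a_def)
      finally have a: "2 * \<delta> \<le> a" by simp
      have exponent: "\<delta>\<^sup>2 * a powr (- (1 + \<alpha> / 2)) = \<delta> powr e"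
      proof -
        have "\<delta>\<^sup>2 * a powr (- (1 + \<alpha> / 2)) = \<delta> powr 2 * \<delta> powr ((1 - \<theta>) * (- (1 + \<alpha> / 2)))"
          using \<delta> by (simp add: a_def powr_powr powr_numeral)
        also have "\<dots> = \<delta> powr (2 + (1 - \<theta>) * (- (1 + \<alpha> / 2)))" by (rule powr_add[symmetric])
        also have "2 + (1 - \<theta>) * (- (1 + \<alpha> / 2)) = e" by (simp add: e_def field_simps)
        finally show ?thesis .
      qed
      have "tail_mass \<kappa> lam \<Lambda> \<delta> a \<le> ennreal (B * \<delta> powr e)"
        using small[OF \<delta>(1) a] by (simp only: mult.assoc exponent)
      also have "B * \<delta> powr e \<le> C * \<delta> powr e" using M by (intro mult_right_mono) (auto simp: C_def)
      finally show ?thesis by (simp add: ennreal_leI)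
    next
      case False
      have "2 powr (- e / \<theta>) \<le> \<delta> powr e"
        using False \<delta> \<theta> e by (intro powr_ge_two_powr_if_powr_gt_half) auto
      then have "1 \<le> 2 powr (e / \<theta>) * \<delta> powr e"
        by (simp add: powr_minus_divide field_simps)
      then have "M * 1 \<le> M * (2 powr (e / \<theta>) * \<delta> powr e)" using M by (rule mult_left_mono)
      moreover have "C * \<delta> powr e = B * \<delta> powr e + M * (2 powr (e / \<theta>) * \<delta> powr e)"
        by (simp add: C_def algebra_simps)
      moreover have "0 \<le> B * \<delta> powr e" using B by simp
      ultimately have "M \<le> C * \<delta> powr e" by linarith
      then show ?thesis
        by (intro order_trans[OF tail_mass_le_integral_cov_profile[OF lam] ennreal_leI]) (simp add: M_def)
    qed
    then show "tail_mass \<kappa> lam \<Lambda> \<delta> (\<delta> powr (1 - \<theta>)) \<le> ennreal (C * \<delta> powr (1 - \<alpha> / 2) * \<delta> powr ((1 + \<alpha> / 2) * \<theta>))"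
      by (simp add: a_def P mult.assoc)
  qed
qed

lemma Pi_abs_tail_powr_bound:
  assumes lam: "lam > 0" and \<theta>: "0 < \<theta>" "\<theta> < 1"
  obtains C where "C > 0"
    "\<And>\<delta>. 0 < \<delta> \<Longrightarrow> \<delta> < 1 \<Longrightarrow>
       Pi_abs \<kappa> lam \<Lambda> \<delta> ({\<delta> powr (1 - \<theta>)<..} \<times> UNIV \<times> UNIV) \<le> ennreal (C * \<delta> powr ((1 + \<alpha> / 2) * \<theta>))"
proof -
  obtain C where C: "C \<ge> 0" and tail: "\<And>\<delta>. 0 < \<delta> \<Longrightarrow> \<delta> < 1 \<Longrightarrow>
      tail_mass \<kappa> lam \<Lambda> \<delta> (\<delta> powr (1 - \<theta>)) \<le> ennreal (C * \<delta> powr (1 - \<alpha> / 2) * \<delta> powr ((1 + \<alpha> / 2) * \<theta>))"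
    using tail_mass_powr_bound[OF lam \<theta>] by blast
  define T0 where "T0 = K * exp (- lam)"
  have T0: "T0 > 0" using K_pos by (simp add: T0_def)
  show thesis
  proof (rule that)
    show "C / T0 + 1 > 0" using C T0 by (simp add: add_nonneg_pos)
    fix \<delta> :: real assume \<delta>: "0 < \<delta>" "\<delta> < 1"
    define T where "T = tau2 \<kappa> lam \<Lambda> \<delta>"
    define D where "D = \<delta> powr (1 - \<alpha> / 2)"
    define P where "P = \<delta> powr ((1 + \<alpha> / 2) * \<theta>)"
    have D: "D > 0" using \<delta> by (simp add: D_def)
    have TD: "T0 * D \<le> T" using tau2_lower_bound[OF lam \<delta>(1)] \<delta> by (simp add: T_def T0_def D_def)
    moreover have "0 < T0 * D" using T0 D by simp
    ultimately have T: "T > 0" by linarith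
    have "Pi_abs \<kappa> lam \<Lambda> \<delta> ({\<delta> powr (1 - \<theta>)<..} \<times> UNIV \<times> UNIV)
        \<le> ennreal (1 / T) * tail_mass \<kappa> lam \<Lambda> \<delta> (\<delta> powr (1 - \<theta>))"
      using Pi_abs_le_tail_mass T by (simp add: T_def)
    also have "\<dots> \<le> ennreal (1 / T) * ennreal (C * D * P)"
      using tail[OF \<delta>] by (intro mult_left_mono) (simp_all add: D_def P_def)
    also have "\<dots> = ennreal (C * P * D / T)"
      using T C D by (subst ennreal_mult[symmetric]) (simp_all add: P_def mult_ac)
    also have "C * P * D / T \<le> C * P * D / (T0 * D)"
      using C T0 D T TD by (intro divide_left_mono) (auto simp: P_def)
    also have "\<dots> \<le> (C / T0 + 1) * P" using D T0 by (simp add: P_def field_simps)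
    finally show "Pi_abs \<kappa> lam \<Lambda> \<delta> ({\<delta> powr (1 - \<theta>)<..} \<times> UNIV \<times> UNIV) \<le> ennreal ((C / T0 + 1) * P)"
      by (simp add: ennreal_leI)
  qed
qed

end

theorem lemmaB4:
  fixes \<kappa> lam \<alpha> :: real and \<Delta> :: "nat \<Rightarrow> real"
    and \<Lambda> :: "('a::euclidean_space \<times> 'a) measure"
  assumes "\<kappa> > 0" and "lam > 0"
    and "\<And>n. 0 < \<Delta> n \<and> \<Delta> n < 1"
    and "\<Delta> \<longlonglongrightarrow> 0"
    and "noise_cov \<alpha> \<Lambda>"
    and "0 < \<alpha>" and "\<alpha> < 2" and "\<alpha> \<le> real DIM('a)"
  shows "\<forall>\<theta>::real. 0 < \<theta> \<and> \<theta> < 1 \<longrightarrow>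
           (\<exists>C>0. \<forall>n. Pi_abs \<kappa> lam \<Lambda> (\<Delta> n) ({\<Delta> n powr (1 - \<theta>)<..} \<times> UNIV \<times> UNIV)
                     \<le> ennreal (C * \<Delta> n powr ((1 + \<alpha> / 2) * \<theta>)))"
proof (intro allI impI)
  fix \<theta> :: real
  assume \<theta>: "0 < \<theta> \<and> \<theta> < 1"
  obtain K where "heat_noise \<kappa> \<alpha> K \<Lambda>"
    using noise_cov_heat_noise[OF assms(5,1,7)] by blast
  then interpret heat_noise \<kappa> \<alpha> K \<Lambda> .
  obtain C where "C > 0" and bound: "\<And>\<delta>. 0 < \<delta> \<Longrightarrow> \<delta> < 1 \<Longrightarrow>
      Pi_abs \<kappa> lam \<Lambda> \<delta> ({\<delta> powr (1 - \<theta>)<..} \<times> UNIV \<times> UNIV) \<le> ennreal (C * \<delta> powr ((1 + \<alpha> / 2) * \<theta>))"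
    using Pi_abs_tail_powr_bound[OF assms(2)] \<theta> by blast
  then show "\<exists>C>0. \<forall>n. Pi_abs \<kappa> lam \<Lambda> (\<Delta> n) ({\<Delta> n powr (1 - \<theta>)<..} \<times> UNIV \<times> UNIV)
      \<le> ennreal (C * \<Delta> n powr ((1 + \<alpha> / 2) * \<theta>))"
    using assms(3) by blast
qed

end
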